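(* Let $Y(y)=\int^y\frac{e^{3/(2s)}}{|s|^{3/2}}\,ds$ be a fixed antiderivative on an open interval not containing $0$, and for $\kappa\in\mathbb R\setminus\{0\}$ let $g[\kappa]=\kappa\,(Y(y)+x)\,dx\,dy$. If $\kappa,\tilde\kappa\in\mathbb R\setminus\{0\}$ and there is a local diffeomorphism $\phi$ between open subsets of the domain with $\phi^*g[\tilde\kappa]=g[\kappa]$, then $\kappa=\tilde\kappa$.
   Context: $dx\,dy$ denotes the symmetric product $\tfrac12(dx\otimes dy+dy\otimes dx)$. *)

theory Defs
  imports "HOL-Analysis.Analysis"
begin

fun Ck_on :: "nat \<Rightarrow> (real \<times> real) set \<Rightarrow> (real \<times> real \<Rightarrow> 'b::real_normed_vector) \<Rightarrow> bool" where
  "Ck_on 0 U f = continuous_on U f"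
| "Ck_on (Suc k) U f = (f differentiable_on U \<and>
      (\<forall>v. Ck_on k U (\<lambda>p. frechet_derivative f (at p) v)))"

definition smooth_on :: "(real \<times> real) set \<Rightarrow> (real \<times> real \<Rightarrow> 'b::real_normed_vector) \<Rightarrow> bool" where
  "smooth_on U f \<longleftrightarrow> (\<forall>k. Ck_on k U f)"

definition local_diffeo_on :: "(real \<times> real) set \<Rightarrow> (real \<times> real \<Rightarrow> real \<times> real) \<Rightarrow> bool" where
  "local_diffeo_on U \<phi> \<longleftrightarrow> open U \<and>
     (\<forall>p\<in>U. \<exists>W. open W \<and> p \<in> W \<and> W \<subseteq> U \<and> open (\<phi> ` W) \<and> inj_on \<phi> W \<and>
        smooth_on W \<phi> \<and> smooth_on (\<phi> ` W) (the_inv_into W \<phi>))"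

text \<open>The metric g[kappa] = kappa (Y(y)+x) dx dy, with dx dy the symmetric product
  (dx(v)dy(w) + dy(v)dx(w))/2, as a bilinear form at the point (x,y).\<close>
definition gmet :: "(real \<Rightarrow> real) \<Rightarrow> real \<Rightarrow> real \<times> real \<Rightarrow> real \<times> real \<Rightarrow> real \<times> real \<Rightarrow> real" where
  "gmet Y \<kappa> p v w = \<kappa> * (Y (snd p) + fst p) * ((fst v * snd w + snd v * fst w) / 2)"

definition pullback :: "(real \<times> real \<Rightarrow> real \<times> real) \<Rightarrow> (real \<times> real \<Rightarrow> real \<times> real \<Rightarrow> real \<times> real \<Rightarrow> real)
    \<Rightarrow> real \<times> real \<Rightarrow> real \<times> real \<Rightarrow> real \<times> real \<Rightarrow> real" where
  "pullback \<phi> g p v w = g (\<phi> p) (frechet_derivative \<phi> (at p) v) (frechet_derivative \<phi> (at p) w)"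

end

theory Submission
  imports Defs "HOL-Computational_Algebra.Polynomial"
begin

text \<open>Write \<phi> = (P, Q). Comparing the coefficients of dx^2, dy^2 and dx dy in the pullback
  of g[\<kappa>'] gives P_x Q_x = P_y Q_y = 0 wherever the factor Y(y) + x of g[\<kappa>] is nonzero. Near
  such a point \<phi> therefore either preserves the coordinate lines, \<phi>(x,y) = (a(x), b(y)), or
  swaps them, \<phi>(x,y) = (a(y), b(x)), and the dx dy coefficient becomes a functional equation
  \<kappa>' (Y(b) + a) a' b' = \<kappa> (Y(y) + x). Comparing it at two values of the variable not
  seen by a shows that a' is affine in x, respectively in Y(y).

  In the first case a' must be constant, so Y \<circ> b = q Y + C with b' constant; differentiating
  twice and using that the logarithmic derivative of Y' is -3(1+s)/(2s^2) forces b = id and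
  q = 1, whence \<kappa> = \<kappa>'. In the second case (\<alpha> Y + \<beta>)^3 is proportional to Y', and two
  more differentiations turn this into the identity 2\<eta>^2 = 3\<eta>' for \<eta> = Y''/Y', which fails.\<close>

section \<open>Elementary calculus\<close>

lemma quadratic_coeffs_eq_0:
  fixes c0 c1 c2 :: real
  assumes "infinite S" "\<And>y. y \<in> S \<Longrightarrow> c0 + c1 * y + c2 * y^2 = 0"
  shows "c0 = 0 \<and> c1 = 0 \<and> c2 = 0"
proof -
  have "S \<subseteq> {y. poly [:c0, c1, c2:] y = 0}"
    using assms(2) by (auto simp: algebra_simps power2_eq_square)
  then have "\<not> finite {y. poly [:c0, c1, c2:] y = 0}"
    using assms(1) finite_subset by blast
  then have "[:c0, c1, c2:] = 0" using poly_roots_finite by blast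
  then show ?thesis by simp
qed

lemma DERIV_unique_on_open:
  fixes f g :: "real \<Rightarrow> real"
  assumes "open S" "x \<in> S" "\<And>z. z \<in> S \<Longrightarrow> f z = g z"
    and "(f has_real_derivative f') (at x)" "(g has_real_derivative g') (at x)"
  shows "f' = g'"
proof -
  have "(g has_real_derivative f') (at x)"
    using has_field_derivative_transform_within_open[OF assms(4,1,2)] assms(3) by blast
  then show ?thesis using assms(5) DERIV_unique by blast
qed

lemma DERIV_const_imp_affine:
  fixes f :: "real \<Rightarrow> real"
  assumes "convex S" "\<And>x. x \<in> S \<Longrightarrow> (f has_real_derivative c) (at x)"
  obtains r where "\<And>x. x \<in> S \<Longrightarrow> f x = c * x + r"
proof -
  have "\<exists>r. \<forall>x\<in>S. f x - c * x = r"
  proof (rule has_field_derivative_zero_constant[OF assms(1)])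
    fix x assume "x \<in> S"
    have "((\<lambda>x. f x - c * x) has_real_derivative c - c * 1) (at x)"
      using assms(2)[OF \<open>x \<in> S\<close>] by (auto intro!: derivative_eq_intros)
    then show "((\<lambda>x. f x - c * x) has_real_derivative 0) (at x within S)"
      by (simp add: has_field_derivative_at_within)
  qed
  then show ?thesis using that by (metis add_diff_cancel_left' diff_add_cancel)
qed

lemma Ioo_two_points:
  fixes l r :: real
  assumes "l < r"
  obtains s1 s2 where "s1 \<in> {l<..<r}" "s2 \<in> {l<..<r}" "s1 < s2"
proof -
  obtain s1 where "l < s1" "s1 < r" using dense[OF assms] by blast
  moreover obtain s2 where "s1 < s2" "s2 < r" using dense[OF \<open>s1 < r\<close>] by blast
  ultimately show ?thesis using that by simp
qed

lemma affine_of_two_relations: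
  fixes A a T :: "'a \<Rightarrow> real"
  assumes rel1: "\<And>s. s \<in> S \<Longrightarrow> K1 * A s * (d1 + a s) = \<kappa> * (c1 + T s)"
    and rel2: "\<And>s. s \<in> S \<Longrightarrow> K2 * A s * (d2 + a s) = \<kappa> * (c2 + T s)"
    and nz: "K1 \<noteq> 0" "K2 \<noteq> 0" "\<kappa> \<noteq> 0" "c1 \<noteq> c2"
    and T: "s1 \<in> S" "s2 \<in> S" "T s1 \<noteq> T s2"
  obtains p q where "\<And>s. s \<in> S \<Longrightarrow> A s = p * T s + q"
proof -
  define m1 m2 where "m1 = \<kappa> / K1" and "m2 = \<kappa> / K2"
  have rel: "A s * (d1 - d2) = (m1 - m2) * T s + (m1 * c1 - m2 * c2)" if "s \<in> S" for s
  proof -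
    have "A s * (d1 + a s) = m1 * (c1 + T s)" "A s * (d2 + a s) = m2 * (c2 + T s)"
      using rel1[OF that] rel2[OF that] nz(1,2)
      by (simp_all add: m1_def m2_def eq_divide_eq ac_simps)
    then show ?thesis by (simp add: algebra_simps)
  qed
  have "d1 \<noteq> d2"
  proof
    assume "d1 = d2"
    then have "(m1 - m2) * (T s1 - T s2) = 0"
      using rel[OF T(1)] rel[OF T(2)] by (simp add: algebra_simps)
    then have "m1 = m2" using T(3) by simp
    then have "m1 * (c1 - c2) = 0"
      using rel[OF T(1)] \<open>d1 = d2\<close> by (simp add: right_diff_distrib)
    moreover have "m1 \<noteq> 0" using nz by (simp add: m1_def)
    ultimately show False using nz(4) by simp
  qed
  show ?thesis
  proof (rule that)
    fix s assume "s \<in> S"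
    have "A s = ((m1 - m2) * T s + (m1 * c1 - m2 * c2)) / (d1 - d2)"
      using rel[OF \<open>s \<in> S\<close>] \<open>d1 \<noteq> d2\<close> by (simp add: eq_divide_eq)
    then show "A s = (m1 - m2) / (d1 - d2) * T s + (m1 * c1 - m2 * c2) / (d1 - d2)"
      by (simp add: add_divide_distrib)
  qed
qed

lemma affine_derivative_is_constant:
  fixes a :: "real \<Rightarrow> real"
  assumes "open S" "x0 \<in> S" "p * x0 + q \<noteq> 0" "K \<noteq> 0"
    and a': "\<And>x. x \<in> S \<Longrightarrow> (a has_real_derivative p * x + q) (at x)"
    and rel: "\<And>x. x \<in> S \<Longrightarrow> K * (p * x + q) * (d + a x) = \<kappa> * (c + x)"
  shows "p = 0"
proof -
  have rel': "K * (p * (d + a x) + (p * x + q) * (p * x + q)) = \<kappa>" if "x \<in> S" for x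
  proof (rule DERIV_unique_on_open[OF assms(1) that rel])
    show "((\<lambda>x. K * (p * x + q) * (d + a x)) has_real_derivative
        K * (p * (d + a x) + (p * x + q) * (p * x + q))) (at x)"
      using a'[OF that] by (auto intro!: derivative_eq_intros simp: algebra_simps)
  qed (auto intro!: derivative_eq_intros)
  have "K * (p * (p * x0 + q) + 2 * (p * x0 + q) * p) = 0"
  proof (rule DERIV_unique_on_open[OF assms(1,2) rel'])
    show "((\<lambda>x. K * (p * (d + a x) + (p * x + q) * (p * x + q))) has_real_derivative
        K * (p * (p * x0 + q) + 2 * (p * x0 + q) * p)) (at x0)"
      using a'[OF assms(2)] by (auto intro!: derivative_eq_intros simp: algebra_simps)
  qed auto
  then have "3 * K * p * (p * x0 + q) = 0" by (simp add: algebra_simps)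
  then show ?thesis using assms(3,4) by simp
qed

lemma has_derivative_partials:
  fixes f :: "real \<times> real \<Rightarrow> real"
  assumes "(f has_derivative Df) (at (x, y))"
  shows "((\<lambda>t. f (t, y)) has_real_derivative Df (1, 0)) (at x)"
    and "((\<lambda>t. f (x, t)) has_real_derivative Df (0, 1)) (at y)"
proof -
  have lin: "linear Df" using assms by (rule has_derivative_linear)
  have "((\<lambda>t. (t, y)) has_derivative (\<lambda>h. (h, 0))) (at x)"
    by (auto intro!: derivative_eq_intros)
  from has_derivative_compose[OF this, of f Df] assms
  have "((\<lambda>t. f (t, y)) has_derivative (\<lambda>h. Df (h, 0))) (at x)" by simp
  moreover have "(\<lambda>h. Df (h, 0)) = (*) (Df (1, 0))"
  proof
    fix h show "Df (h, 0) = Df (1, 0) * h"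
      using linear_cmul[OF lin, of h "(1, 0)"] by (simp add: mult.commute)
  qed
  ultimately show "((\<lambda>t. f (t, y)) has_real_derivative Df (1, 0)) (at x)"
    by (simp add: has_field_derivative_def)
  have "((\<lambda>t. (x, t)) has_derivative (\<lambda>h. (0, h))) (at y)"
    by (auto intro!: derivative_eq_intros)
  from has_derivative_compose[OF this, of f Df] assms
  have "((\<lambda>t. f (x, t)) has_derivative (\<lambda>h. Df (0, h))) (at y)" by simp
  moreover have "(\<lambda>h. Df (0, h)) = (*) (Df (0, 1))"
  proof
    fix h show "Df (0, h) = Df (0, 1) * h"
      using linear_cmul[OF lin, of h "(0, 1)"] by (simp add: mult.commute)
  qed
  ultimately show "((\<lambda>t. f (x, t)) has_real_derivative Df (0, 1)) (at y)"
    by (simp add: has_field_derivative_def)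
qed

lemma open_square_nonvanishing:
  fixes h :: "real \<times> real \<Rightarrow> real"
  assumes "open W" "continuous_on W h" "(x0, y0) \<in> W" "h (x0, y0) \<noteq> 0"
  obtains \<delta> where "\<delta> > 0"
    "\<And>x y. x \<in> {x0 - \<delta><..<x0 + \<delta>} \<Longrightarrow> y \<in> {y0 - \<delta><..<y0 + \<delta>} \<Longrightarrow> (x, y) \<in> W \<and> h (x, y) \<noteq> 0"
proof -
  have "open (W \<inter> h -` (-{0}))"
    using assms(1,2) by (intro continuous_open_preimage) auto
  then obtain e where "e > 0" and e: "ball (x0, y0) e \<subseteq> W \<inter> h -` (-{0})"
    using assms(3,4) by (metis IntI open_contains_ball vimage_eq ComplI singletonD)
  show ?thesis
  proof (rule that[of "e / 2"])
    fix x y assume "x \<in> {x0 - e / 2<..<x0 + e / 2}" "y \<in> {y0 - e / 2<..<y0 + e / 2}"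
    then have "\<bar>x0 - x\<bar> < e / 2" "\<bar>y0 - y\<bar> < e / 2" unfolding abs_less_iff by auto
    then have "dist (x0, y0) (x, y) < e"
      using sqrt_sum_squares_le_sum_abs[of "x0 - x" "y0 - y"]
      by (simp add: dist_Pair_Pair dist_real_def)
    then show "(x, y) \<in> W \<and> h (x, y) \<noteq> 0" using e by auto
  qed (use \<open>e > 0\<close> in simp)
qed

lemma separated_variables:
  fixes u v ux vy :: "real \<times> real \<Rightarrow> real"
  assumes L: "open L" "convex L" "x0 \<in> L" and J: "open J" "convex J" "y0 \<in> J"
    and u: "\<And>x y. x \<in> L \<Longrightarrow> y \<in> J \<Longrightarrow>
      ((\<lambda>t. u (t, y)) has_real_derivative ux (x, y)) (at x) \<and> ((\<lambda>t. u (x, t)) has_real_derivative 0) (at y)"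
    and v: "\<And>x y. x \<in> L \<Longrightarrow> y \<in> J \<Longrightarrow>
      ((\<lambda>t. v (t, y)) has_real_derivative 0) (at x) \<and> ((\<lambda>t. v (x, t)) has_real_derivative vy (x, y)) (at y)"
    and "x \<in> L" "y \<in> J"
  shows "u (x, y) = u (x, y0) \<and> v (x, y) = v (x0, y) \<and> ux (x, y) = ux (x, y0) \<and> vy (x, y) = vy (x0, y)"
proof -
  have u_eq: "u (x', y) = u (x', y0)" if x': "x' \<in> L" for x'
  proof -
    obtain c where "\<And>t. t \<in> J \<Longrightarrow> u (x', t) = 0 * t + c"
      by (rule DERIV_const_imp_affine[of J "\<lambda>t. u (x', t)" 0]) (use J(2) u[OF x'] in auto)
    then show ?thesis using J(3) \<open>y \<in> J\<close> by simp
  qed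
  have v_eq: "v (x, y') = v (x0, y')" if y': "y' \<in> J" for y'
  proof -
    obtain c where "\<And>t. t \<in> L \<Longrightarrow> v (t, y') = 0 * t + c"
      by (rule DERIV_const_imp_affine[of L "\<lambda>t. v (t, y')" 0]) (use L(2) v[OF _ y'] in auto)
    then show ?thesis using L(3) \<open>x \<in> L\<close> by simp
  qed
  have "ux (x, y) = ux (x, y0)"
    by (rule DERIV_unique_on_open[OF L(1) \<open>x \<in> L\<close> u_eq])
      (use u \<open>x \<in> L\<close> \<open>y \<in> J\<close> J(3) in blast)+
  moreover have "vy (x, y) = vy (x0, y)"
    by (rule DERIV_unique_on_open[OF J(1) \<open>y \<in> J\<close> v_eq])
      (use v \<open>x \<in> L\<close> \<open>y \<in> J\<close> L(3) in blast)+
  ultimately show ?thesis using u_eq[OF \<open>x \<in> L\<close>] v_eq[OF \<open>y \<in> J\<close>] by simp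
qed

section \<open>The derivative of Y and its logarithmic derivative\<close>

definition rho :: "real \<Rightarrow> real" where
  "rho s = exp (3 / (2 * s)) / \<bar>s\<bar> powr (3/2)"

definition rho_log_deriv :: "real \<Rightarrow> real" where
  "rho_log_deriv s = -(3/2) * (1 / s^2 + 1 / s)"

lemma rho_eq_exp:
  assumes "s \<noteq> 0" shows "rho s = exp (3 / (2 * s) - 3/4 * ln (s^2))"
proof -
  have "ln (s^2) = 2 * ln \<bar>s\<bar>"
    using ln_realpow[of "\<bar>s\<bar>" 2] assms by simp
  then show ?thesis by (simp add: rho_def powr_def exp_diff assms)
qed

lemma rho_pos: "s \<noteq> 0 \<Longrightarrow> rho s > 0"
  by (simp add: rho_eq_exp)

lemma rho_has_derivative:
  assumes "s \<noteq> 0" shows "(rho has_real_derivative rho s * rho_log_deriv s) (at s)"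
proof -
  have "((\<lambda>t. ln (t^2)) has_real_derivative 1 / s^2 * (2 * s)) (at s)"
    by (rule DERIV_chain2[OF DERIV_ln_divide]) (use assms in \<open>auto intro!: derivative_eq_intros\<close>)
  moreover have "((\<lambda>t. 3 / (2 * t)) has_real_derivative - 3 / (2 * s^2)) (at s)"
    using assms by (auto intro!: derivative_eq_intros simp: power2_eq_square)
  ultimately have "((\<lambda>t. 3 / (2 * t) - 3/4 * ln (t^2)) has_real_derivative
      - 3 / (2 * s^2) - 3/4 * (1 / s^2 * (2 * s))) (at s)"
    by (intro DERIV_diff DERIV_cmult)
  then have "((\<lambda>t. 3 / (2 * t) - 3/4 * ln (t^2)) has_real_derivative rho_log_deriv s) (at s)"
    by (rule DERIV_cong) (use assms in \<open>simp add: rho_log_deriv_def power2_eq_square field_simps\<close>)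
  then have "((\<lambda>t. exp (3 / (2 * t) - 3/4 * ln (t^2))) has_real_derivative rho s * rho_log_deriv s) (at s)"
    using DERIV_chain2[OF DERIV_exp] assms by (simp add: rho_eq_exp)
  then show ?thesis
  proof (rule has_field_derivative_transform_within_open[where S = "-{0}"])
    show "open (-{0::real})" by (rule open_Compl) simp
    show "s \<in> -{0}" using assms by simp
    show "exp (3 / (2 * t) - 3/4 * ln (t^2)) = rho t" if "t \<in> -{0}" for t
      using that by (simp add: rho_eq_exp)
  qed
qed

lemma rho_log_deriv_has_derivative:
  assumes "s \<noteq> 0"
  shows "(rho_log_deriv has_real_derivative (3/2) * (2 / s^3 + 1 / s^2)) (at s)"
  unfolding rho_log_deriv_def using assms
  by (auto intro!: derivative_eq_intros simp: power2_eq_square power3_eq_cube field_simps)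

lemma rho_log_deriv_times_square: "s \<noteq> 0 \<Longrightarrow> s^2 * rho_log_deriv s = -(3/2) * (1 + s)"
  by (simp add: rho_log_deriv_def power2_eq_square field_simps)

lemma rho_log_deriv_eq_0_iff: "s \<noteq> 0 \<Longrightarrow> rho_log_deriv s = 0 \<longleftrightarrow> s = -1"
  using rho_log_deriv_times_square[of s] by auto

text \<open>The right-hand side is three times the derivative of rho_log_deriv.\<close>

lemma rho_log_deriv_not_Riccati:
  assumes "s \<noteq> 0" shows "2 * rho_log_deriv s ^ 2 \<noteq> 3 * ((3/2) * (2 / s^3 + 1 / s^2))"
proof
  assume "2 * rho_log_deriv s ^ 2 = 3 * ((3/2) * (2 / s^3 + 1 / s^2))"
  then have "(9/2) * ((1 + s)^2 / s^4) = (9/2) * ((2 * s + s^2) / s^4)"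
    using assms by (simp add: rho_log_deriv_def field_simps power2_eq_square power3_eq_cube power4_eq_xxxx)
  then have "(1 + s)^2 = 2 * s + s^2" using assms by simp
  then show False by (simp add: power2_eq_square algebra_simps)
qed

lemma rho_log_deriv_affine_invariant:
  assumes "infinite S"
    and "\<And>y. y \<in> S \<Longrightarrow> y \<noteq> 0 \<and> \<alpha> * y + \<nu> \<noteq> 0 \<and> \<alpha> * rho_log_deriv (\<alpha> * y + \<nu>) = rho_log_deriv y"
  shows "\<alpha> = 1 \<and> \<nu> = 0"
proof -
  have "\<nu>^2 + (2 * \<alpha> * \<nu> + \<nu>^2) * y + (\<alpha>^2 + \<alpha> * \<nu> - \<alpha>) * y^2 = 0" if "y \<in> S" for y
  proof -
    define z where "z = \<alpha> * y + \<nu>"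
    have "y \<noteq> 0" "z \<noteq> 0" "\<alpha> * rho_log_deriv z = rho_log_deriv y"
      using assms(2)[OF that] by (simp_all add: z_def)
    then have "\<alpha> * (z^2 * rho_log_deriv z) * y^2 = (y^2 * rho_log_deriv y) * z^2"
      by (simp add: ac_simps flip: \<open>\<alpha> * rho_log_deriv z = rho_log_deriv y\<close>)
    then have "\<alpha> * (-(3/2) * (1 + z)) * y^2 = -(3/2) * (1 + y) * z^2"
      by (simp only: rho_log_deriv_times_square[OF \<open>y \<noteq> 0\<close>] rho_log_deriv_times_square[OF \<open>z \<noteq> 0\<close>])
    then have "-(3/2) * (\<alpha> * y^2 * (1 + z)) = -(3/2) * (z^2 * (1 + y))"
      by (simp only: ac_simps)
    then have "\<alpha> * y^2 * (1 + z) = z^2 * (1 + y)" by (simp add: ac_simps)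
    have "\<nu>^2 + (2 * \<alpha> * \<nu> + \<nu>^2) * y + (\<alpha>^2 + \<alpha> * \<nu> - \<alpha>) * y^2 =
        z^2 * (1 + y) - \<alpha> * y^2 * (1 + z)"
      unfolding z_def power2_eq_square by algebra
    also have "\<dots> = 0" using \<open>\<alpha> * y^2 * (1 + z) = z^2 * (1 + y)\<close> by simp
    finally show ?thesis .
  qed
  then have "\<nu>^2 = 0 \<and> 2 * \<alpha> * \<nu> + \<nu>^2 = 0 \<and> \<alpha>^2 + \<alpha> * \<nu> - \<alpha> = 0"
    by (rule quadratic_coeffs_eq_0[OF assms(1)])
  then have "\<nu> = 0" and "\<alpha> * (\<alpha> - 1) = 0"
    by (auto simp: power2_eq_square right_diff_distrib)
  moreover obtain y where "y \<in> S" using infinite_imp_nonempty[OF assms(1)] by blast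
  ultimately show ?thesis using assms(2)[of y] by auto
qed

section \<open>Functional equations for Y\<close>

locale rho_antiderivative =
  fixes I :: "real set" and Y :: "real \<Rightarrow> real"
  assumes zero_notin_I: "0 \<notin> I"
    and Y_has_derivative: "\<And>s. s \<in> I \<Longrightarrow> (Y has_real_derivative rho s) (at s)"
begin

lemma Y_less:
  assumes "{y1..y2} \<subseteq> I" "y1 < y2" shows "Y y1 < Y y2"
proof (rule DERIV_pos_imp_increasing[OF assms(2)])
  fix s assume "y1 \<le> s" "s \<le> y2"
  then have "s \<in> I" using assms(1) by auto
  moreover have "s \<noteq> 0" using \<open>s \<in> I\<close> zero_notin_I by auto
  ultimately show "\<exists>d. (Y has_real_derivative d) (at s) \<and> 0 < d"
    using Y_has_derivative rho_pos by blast
qed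

lemma conjugation_derivatives:
  assumes J: "open S" "S \<subseteq> I"
    and b: "\<And>y. y \<in> S \<Longrightarrow> b y \<in> I \<and> (b has_real_derivative \<alpha>) (at y)"
    and conj: "\<And>y. y \<in> S \<Longrightarrow> Y (b y) = q * Y y + C" and y: "y \<in> S"
  shows "rho (b y) * \<alpha> = q * rho y" and "\<alpha> * rho (b y) * (\<alpha> * rho_log_deriv (b y) - rho_log_deriv y) = 0"
proof -
  have nz: "y \<noteq> 0" "b y \<noteq> 0" if "y \<in> S" for y
    using that J b zero_notin_I by force+
  have rho_conj: "rho (b y) * \<alpha> = q * rho y" if y: "y \<in> S" for y
  proof (rule DERIV_unique_on_open[of S y "\<lambda>z. Y (b z)" "\<lambda>z. q * Y z + C"])
    have "b y \<in> I" "(b has_real_derivative \<alpha>) (at y)" using b[OF y] by simp_all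
    then show "((\<lambda>z. Y (b z)) has_real_derivative rho (b y) * \<alpha>) (at y)"
      by (rule DERIV_chain2[OF Y_has_derivative])
    have "y \<in> I" using y J by blast
    then show "((\<lambda>z. q * Y z + C) has_real_derivative q * rho y) (at y)"
      using Y_has_derivative by (auto intro!: derivative_eq_intros)
  qed (use y conj J in simp_all)
  then show "rho (b y) * \<alpha> = q * rho y" using y .
  have "rho (b y) * rho_log_deriv (b y) * \<alpha> * \<alpha> = q * (rho y * rho_log_deriv y)"
  proof (rule DERIV_unique_on_open[of S y "\<lambda>z. rho (b z) * \<alpha>" "\<lambda>z. q * rho z"])
    have "(b has_real_derivative \<alpha>) (at y)" using b[OF y] by simp
    from DERIV_chain2[OF rho_has_derivative[OF nz(2)[OF y]] this]
    show "((\<lambda>z. rho (b z) * \<alpha>) has_real_derivative rho (b y) * rho_log_deriv (b y) * \<alpha> * \<alpha>) (at y)"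
      by (auto intro!: derivative_eq_intros)
    show "((\<lambda>z. q * rho z) has_real_derivative q * (rho y * rho_log_deriv y)) (at y)"
      using rho_has_derivative[OF nz(1)[OF y]] by (auto intro!: derivative_eq_intros)
  qed (use y rho_conj J in simp_all)
  also have "\<dots> = rho (b y) * \<alpha> * rho_log_deriv y" using rho_conj[OF y] by simp
  finally show "\<alpha> * rho (b y) * (\<alpha> * rho_log_deriv (b y) - rho_log_deriv y) = 0"
    by (simp add: algebra_simps)
qed

lemma affine_conjugation_trivial:
  assumes J: "l < r" "{l<..<r} \<subseteq> I" and "\<alpha> \<noteq> 0"
    and b: "\<And>y. y \<in> {l<..<r} \<Longrightarrow> b y \<in> I \<and> (b has_real_derivative \<alpha>) (at y)"
    and conj: "\<And>y. y \<in> {l<..<r} \<Longrightarrow> Y (b y) = q * Y y + C"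
  shows "\<alpha> = 1 \<and> q = 1"
proof -
  let ?J = "{l<..<r}"
  have nz: "y \<noteq> 0" "b y \<noteq> 0" if "y \<in> ?J" for y
    using that J b zero_notin_I by force+
  have rho_conj: "rho (b y) * \<alpha> = q * rho y" if "y \<in> ?J" for y
    by (rule conjugation_derivatives(1)[where S = ?J]) (use J(2) b conj that in auto)
  have log_conj: "\<alpha> * rho_log_deriv (b y) = rho_log_deriv y" if "y \<in> ?J" for y
  proof -
    have "\<alpha> * rho (b y) * (\<alpha> * rho_log_deriv (b y) - rho_log_deriv y) = 0"
      by (rule conjugation_derivatives(2)[where S = ?J]) (use J(2) b conj that in auto)
    then show ?thesis using rho_pos[OF nz(2)[OF that]] \<open>\<alpha> \<noteq> 0\<close> by simp
  qed
  obtain \<nu> where \<nu>: "\<And>y. y \<in> ?J \<Longrightarrow> b y = \<alpha> * y + \<nu>"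
    by (rule DERIV_const_imp_affine[of ?J b \<alpha>]) (use b in simp_all)
  have "\<alpha> = 1 \<and> \<nu> = 0"
  proof (rule rho_log_deriv_affine_invariant)
    show "infinite ?J" using J(1) by simp
    show "y \<noteq> 0 \<and> \<alpha> * y + \<nu> \<noteq> 0 \<and> \<alpha> * rho_log_deriv (\<alpha> * y + \<nu>) = rho_log_deriv y"
      if "y \<in> ?J" for y
      using nz[OF that] log_conj[OF that] \<nu>[OF that] by simp
  qed
  moreover obtain y where y: "y \<in> ?J" using Ioo_two_points[OF J(1)] by blast
  moreover have "rho y > 0" using rho_pos[OF nz(1)[OF y]] .
  ultimately show ?thesis using rho_conj[OF y] \<nu>[OF y] by simp
qed

lemma product_solution_first_factor_affine:
  assumes L: "xl < xr" and J: "yl < yr" "{yl<..<yr} \<subseteq> I"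
    and a: "\<And>x. x \<in> {xl<..<xr} \<Longrightarrow> (a has_real_derivative a' x) (at x) \<and> a' x \<noteq> 0"
    and b': "\<And>y. y \<in> {yl<..<yr} \<Longrightarrow> b' y \<noteq> 0"
    and rel: "\<And>x y. x \<in> {xl<..<xr} \<Longrightarrow> y \<in> {yl<..<yr} \<Longrightarrow>
      \<kappa>' * (Y (b y) + a x) * (a' x * b' y) = \<kappa> * (Y y + x)"
    and \<kappa>: "\<kappa> \<noteq> 0" "\<kappa>' \<noteq> 0"
  obtains q r where "q \<noteq> 0" "\<And>x. x \<in> {xl<..<xr} \<Longrightarrow> a' x = q \<and> a x = q * x + r"
proof -
  let ?L = "{xl<..<xr}" and ?J = "{yl<..<yr}"
  obtain x1 x2 where x: "x1 \<in> ?L" "x2 \<in> ?L" "x1 < x2" using Ioo_two_points[OF L] .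
  obtain y1 y2 where y: "y1 \<in> ?J" "y2 \<in> ?J" "y1 < y2" using Ioo_two_points[OF J(1)] .
  have "Y y1 < Y y2" by (rule Y_less) (use y J(2) in auto)
  have rel': "(\<kappa>' * b' y) * a' x * (Y (b y) + a x) = \<kappa> * (Y y + x)"
    if "y \<in> ?J" "x \<in> ?L" for x y
    using rel[OF that(2,1)] by (simp add: ac_simps)
  obtain p q where a'_affine: "\<And>x. x \<in> ?L \<Longrightarrow> a' x = p * x + q"
    by (rule affine_of_two_relations[where T = "\<lambda>x. x", OF rel'[OF y(1)] rel'[OF y(2)] _ _ \<kappa>(1) _ x(1,2)])
      (use b' y \<kappa> \<open>Y y1 < Y y2\<close> x in auto)
  have "p = 0"
  proof (rule affine_derivative_is_constant[of ?L x1])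
    show "(a has_real_derivative p * x + q) (at x)" if "x \<in> ?L" for x
      using a[OF that] a'_affine[OF that] by simp
    show "\<kappa>' * b' y1 * (p * x + q) * (Y (b y1) + a x) = \<kappa> * (Y y1 + x)" if "x \<in> ?L" for x
      using rel'[OF y(1) that] a'_affine[OF that] by simp
  qed (use x a[OF x(1)] a'_affine[OF x(1)] b'[OF y(1)] \<kappa> in auto)
  then have a'q: "a' x = q" if "x \<in> ?L" for x using a'_affine[OF that] by simp
  obtain r where r: "\<And>x. x \<in> ?L \<Longrightarrow> a x = q * x + r"
    by (rule DERIV_const_imp_affine[of ?L a q]) (use a a'q in simp_all)
  show ?thesis
  proof (rule that)
    show "q \<noteq> 0" using a[OF x(1)] a'q[OF x(1)] by simp
    show "a' x = q \<and> a x = q * x + r" if "x \<in> ?L" for x using a'q[OF that] r[OF that] by simp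
  qed
qed

lemma product_solution_kappa_eq:
  assumes L: "xl < xr" and J: "yl < yr" "{yl<..<yr} \<subseteq> I"
    and a: "\<And>x. x \<in> {xl<..<xr} \<Longrightarrow> (a has_real_derivative a' x) (at x) \<and> a' x \<noteq> 0"
    and b: "\<And>y. y \<in> {yl<..<yr} \<Longrightarrow> b y \<in> I \<and> (b has_real_derivative b' y) (at y) \<and> b' y \<noteq> 0"
    and rel: "\<And>x y. x \<in> {xl<..<xr} \<Longrightarrow> y \<in> {yl<..<yr} \<Longrightarrow>
      \<kappa>' * (Y (b y) + a x) * (a' x * b' y) = \<kappa> * (Y y + x)"
    and \<kappa>: "\<kappa> \<noteq> 0" "\<kappa>' \<noteq> 0"
  shows "\<kappa> = \<kappa>'"
proof -
  let ?L = "{xl<..<xr}" and ?J = "{yl<..<yr}"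
  obtain q r where "q \<noteq> 0" and a_affine: "\<And>x. x \<in> ?L \<Longrightarrow> a' x = q \<and> a x = q * x + r"
    by (rule product_solution_first_factor_affine[OF L J a _ rel \<kappa>]) (use b in auto)
  obtain x1 x2 where x: "x1 \<in> ?L" "x2 \<in> ?L" "x1 < x2" using Ioo_two_points[OF L] .
  define \<alpha> where "\<alpha> = \<kappa> / (\<kappa>' * q * q)"
  have b_coeffs: "b' y = \<alpha> \<and> Y (b y) = q * Y y - r" if y: "y \<in> ?J" for y
  proof -
    define M where "M = \<kappa>' * q * b' y"
    have "M \<noteq> 0" using b[OF y] \<kappa> \<open>q \<noteq> 0\<close> by (simp add: M_def)
    have lin: "M * (Y (b y) + r) + M * q * x = \<kappa> * Y y + \<kappa> * x" if "x \<in> ?L" for x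
      using rel[OF that y] a_affine[OF that] by (simp add: M_def algebra_simps)
    have "M * q * (x1 - x2) = \<kappa> * (x1 - x2)"
      using lin[OF x(1)] lin[OF x(2)] by (simp add: algebra_simps)
    then have Mq: "M * q = \<kappa>" using x(3) by simp
    then have "b' y = \<alpha>" using \<open>q \<noteq> 0\<close> \<kappa> by (simp add: M_def \<alpha>_def field_simps)
    moreover have "M * (Y (b y) + r) = M * (q * Y y)"
      using lin[OF x(1)] Mq by (simp add: algebra_simps)
    then have "Y (b y) = q * Y y - r" using \<open>M \<noteq> 0\<close> by simp
    ultimately show ?thesis by simp
  qed
  have "\<alpha> = 1 \<and> q = 1"
  proof (rule affine_conjugation_trivial[OF J])
    show "\<alpha> \<noteq> 0" using \<kappa> \<open>q \<noteq> 0\<close> by (simp add: \<alpha>_def)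
    show "b y \<in> I \<and> (b has_real_derivative \<alpha>) (at y)" if "y \<in> ?J" for y
      using b[OF that] b_coeffs[OF that] by simp
    show "Y (b y) = q * Y y + - r" if "y \<in> ?J" for y
      using b_coeffs[OF that] by simp
  qed
  then show ?thesis using \<kappa> by (auto simp: \<alpha>_def)
qed

lemma cube_law_of_swapped_relation:
  assumes "open S" "S \<subseteq> I" "K \<noteq> 0" "y \<in> S"
    and a: "\<And>y. y \<in> S \<Longrightarrow> (a has_real_derivative \<alpha> * Y y + \<beta>) (at y)"
    and rel: "\<And>y. y \<in> S \<Longrightarrow> K * (\<alpha> * Y y + \<beta>) * (e + a y) = \<kappa> * (c + Y y)"
  shows "(\<alpha> * Y y + \<beta>) ^ 3 = \<kappa> * (\<beta> - \<alpha> * c) / K * rho y"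
proof -
  define W where "W = \<alpha> * Y y + \<beta>"
  have Y': "(Y has_real_derivative rho y) (at y)" using assms(2,4) Y_has_derivative by blast
  have rel': "K * (\<alpha> * rho y * (e + a y) + W * W) = \<kappa> * rho y"
  proof (rule DERIV_unique_on_open[OF assms(1,4) rel])
    show "((\<lambda>y. K * (\<alpha> * Y y + \<beta>) * (e + a y)) has_real_derivative
        K * (\<alpha> * rho y * (e + a y) + W * W)) (at y)"
      using Y' a[OF assms(4)] by (auto intro!: derivative_eq_intros simp: W_def algebra_simps)
    show "((\<lambda>y. \<kappa> * (c + Y y)) has_real_derivative \<kappa> * rho y) (at y)"
      using Y' by (auto intro!: derivative_eq_intros)
  qed
  have "K * W ^ 3 = W * (K * (\<alpha> * rho y * (e + a y) + W * W)) - \<alpha> * rho y * (K * W * (e + a y))"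
    by (simp add: algebra_simps power3_eq_cube)
  also have "\<dots> = \<kappa> * rho y * (W - \<alpha> * c - \<alpha> * Y y)"
    using rel' rel[OF assms(4)] by (simp add: W_def algebra_simps)
  also have "\<dots> = \<kappa> * (\<beta> - \<alpha> * c) * rho y" by (simp add: W_def algebra_simps)
  finally show ?thesis using assms(3) by (simp add: W_def field_simps)
qed

lemma affine_cube_law_derivatives:
  assumes "open S" "S \<subseteq> I"
    and cube: "\<And>y. y \<in> S \<Longrightarrow> (\<alpha> * Y y + \<beta>) ^ 3 = K * rho y" and "y \<in> S"
  shows "3 * \<alpha> * (\<alpha> * Y y + \<beta>) ^ 2 = K * rho_log_deriv y"
    and "6 * \<alpha>^2 * (\<alpha> * Y y + \<beta>) * rho y = K * ((3/2) * (2 / y^3 + 1 / y^2))"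
proof -
  define W where "W y = \<alpha> * Y y + \<beta>" for y
  have nz: "y \<noteq> 0" if "y \<in> S" for y using that assms(2) zero_notin_I by blast
  have W': "(W has_real_derivative \<alpha> * rho y) (at y)" if "y \<in> S" for y
    unfolding W_def using Y_has_derivative[of y] that assms(2) by (auto intro!: derivative_eq_intros)
  have sq: "3 * \<alpha> * W y ^ 2 = K * rho_log_deriv y" if y: "y \<in> S" for y
  proof -
    have "3 * W y ^ 2 * (\<alpha> * rho y) = K * (rho y * rho_log_deriv y)"
    proof (rule DERIV_unique_on_open[of S y "\<lambda>y. W y ^ 3" "\<lambda>y. K * rho y"])
      show "((\<lambda>y. W y ^ 3) has_real_derivative 3 * W y ^ 2 * (\<alpha> * rho y)) (at y)"
        using W'[OF y] by (auto intro!: derivative_eq_intros)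
      show "((\<lambda>y. K * rho y) has_real_derivative K * (rho y * rho_log_deriv y)) (at y)"
        using rho_has_derivative[OF nz[OF y]] by (auto intro!: derivative_eq_intros)
    qed (use y cube assms(1) in \<open>simp_all add: W_def\<close>)
    then show ?thesis using rho_pos[OF nz[OF y]] by (simp add: algebra_simps)
  qed
  then show "3 * \<alpha> * (\<alpha> * Y y + \<beta>) ^ 2 = K * rho_log_deriv y" using \<open>y \<in> S\<close> by (simp add: W_def)
  have "6 * \<alpha> * W y * (\<alpha> * rho y) = K * ((3/2) * (2 / y^3 + 1 / y^2))"
  proof (rule DERIV_unique_on_open[of S y "\<lambda>y. 3 * \<alpha> * W y ^ 2" "\<lambda>y. K * rho_log_deriv y"])
    show "((\<lambda>y. 3 * \<alpha> * W y ^ 2) has_real_derivative 6 * \<alpha> * W y * (\<alpha> * rho y)) (at y)"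
      using W'[OF \<open>y \<in> S\<close>] by (auto intro!: derivative_eq_intros)
    show "((\<lambda>y. K * rho_log_deriv y) has_real_derivative K * ((3/2) * (2 / y^3 + 1 / y^2))) (at y)"
      using rho_log_deriv_has_derivative[OF nz[OF \<open>y \<in> S\<close>]] by (auto intro!: derivative_eq_intros)
  qed (use \<open>y \<in> S\<close> sq assms(1) in simp_all)
  then show "6 * \<alpha>^2 * (\<alpha> * Y y + \<beta>) * rho y = K * ((3/2) * (2 / y^3 + 1 / y^2))"
    by (simp add: W_def power2_eq_square ac_simps)
qed

lemma no_affine_cube_law:
  assumes J: "l < r" "{l<..<r} \<subseteq> I" and "K \<noteq> 0"
    and cube: "\<And>y. y \<in> {l<..<r} \<Longrightarrow> (\<alpha> * Y y + \<beta>) ^ 3 = K * rho y"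
  shows False
proof -
  let ?J = "{l<..<r}"
  have derivs: "3 * \<alpha> * (\<alpha> * Y y + \<beta>) ^ 2 = K * rho_log_deriv y"
      "6 * \<alpha>^2 * (\<alpha> * Y y + \<beta>) * rho y = K * ((3/2) * (2 / y^3 + 1 / y^2))"
    if "y \<in> ?J" for y
    using affine_cube_law_derivatives[where S = ?J] J(2) cube that by auto
  have nz: "y \<noteq> 0" if "y \<in> ?J" for y using that J zero_notin_I by blast
  obtain y1 y2 where y: "y1 \<in> ?J" "y2 \<in> ?J" "y1 < y2" using Ioo_two_points[OF J(1)] .
  have "\<alpha> \<noteq> 0"
  proof
    assume "\<alpha> = 0"
    then have "y = -1" if "y \<in> ?J" for y
      using derivs(1)[OF that] \<open>K \<noteq> 0\<close> rho_log_deriv_eq_0_iff[OF nz[OF that]] by simp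
    then have "y1 = -1" "y2 = -1" using y(1,2) by blast+
    with y(3) show False by simp
  qed
  define W where "W = \<alpha> * Y y1 + \<beta>"
  have "(6 * \<alpha>^2 * W * rho y1) * W ^ 3 = K * ((3/2) * (2 / y1^3 + 1 / y1^2)) * (K * rho y1)"
    using derivs(2)[OF y(1)] cube[OF y(1)] by (simp add: W_def)
  then have "6 * \<alpha>^2 * W ^ 4 * rho y1 = K^2 * ((3/2) * (2 / y1^3 + 1 / y1^2)) * rho y1"
    unfolding power2_eq_square power3_eq_cube power4_eq_xxxx by (simp add: ac_simps)
  then have "6 * \<alpha>^2 * W ^ 4 = K^2 * ((3/2) * (2 / y1^3 + 1 / y1^2))"
    using rho_pos[OF nz[OF y(1)]] by simp
  moreover have "9 * \<alpha>^2 * W ^ 4 = K^2 * rho_log_deriv y1 ^ 2"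
    using arg_cong[OF derivs(1)[OF y(1)], of "\<lambda>t. t^2"]
    unfolding W_def[symmetric] power2_eq_square power4_eq_xxxx by (simp add: ac_simps)
  ultimately have "K^2 * (2 * rho_log_deriv y1 ^ 2) = K^2 * (3 * ((3/2) * (2 / y1^3 + 1 / y1^2)))"
    by (simp add: algebra_simps)
  then show False using rho_log_deriv_not_Riccati[OF nz[OF y(1)]] \<open>K \<noteq> 0\<close> by simp
qed

lemma swapped_solution_impossible:
  assumes L: "xl < xr" and J: "yl < yr" "{yl<..<yr} \<subseteq> I"
    and a: "\<And>y. y \<in> {yl<..<yr} \<Longrightarrow> (a has_real_derivative a' y) (at y) \<and> a' y \<noteq> 0"
    and b': "\<And>x. x \<in> {xl<..<xr} \<Longrightarrow> b' x \<noteq> 0"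
    and rel: "\<And>x y. x \<in> {xl<..<xr} \<Longrightarrow> y \<in> {yl<..<yr} \<Longrightarrow>
      \<kappa>' * (Y (b x) + a y) * (a' y * b' x) = \<kappa> * (Y y + x)"
    and \<kappa>: "\<kappa> \<noteq> 0" "\<kappa>' \<noteq> 0"
  shows False
proof -
  let ?L = "{xl<..<xr}" and ?J = "{yl<..<yr}"
  obtain x1 x2 where x: "x1 \<in> ?L" "x2 \<in> ?L" "x1 < x2" using Ioo_two_points[OF L] .
  obtain y1 y2 where y: "y1 \<in> ?J" "y2 \<in> ?J" "y1 < y2" using Ioo_two_points[OF J(1)] .
  have "Y y1 < Y y2" by (rule Y_less) (use y J(2) in auto)
  have rel': "(\<kappa>' * b' x) * a' y * (Y (b x) + a y) = \<kappa> * (x + Y y)"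
    if "x \<in> ?L" "y \<in> ?J" for x y
    using rel[OF that] by (simp add: ac_simps)
  obtain \<alpha> \<beta> where a'_affine: "\<And>y. y \<in> ?J \<Longrightarrow> a' y = \<alpha> * Y y + \<beta>"
    by (rule affine_of_two_relations[where T = Y, OF rel'[OF x(1)] rel'[OF x(2)] _ _ \<kappa>(1) _ y(1,2)])
      (use b' x \<kappa> \<open>Y y1 < Y y2\<close> in auto)
  define K where "K = \<kappa> * (\<beta> - \<alpha> * x1) / (\<kappa>' * b' x1)"
  have cube: "(\<alpha> * Y y + \<beta>) ^ 3 = K * rho y" if "y \<in> ?J" for y
    unfolding K_def
  proof (rule cube_law_of_swapped_relation[OF _ J(2) _ that])
    show "(a has_real_derivative \<alpha> * Y y + \<beta>) (at y)" if "y \<in> ?J" for y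
      using a[OF that] a'_affine[OF that] by simp
    show "\<kappa>' * b' x1 * (\<alpha> * Y y + \<beta>) * (Y (b x1) + a y) = \<kappa> * (x1 + Y y)" if "y \<in> ?J" for y
      using rel'[OF x(1) that] a'_affine[OF that] by simp
  qed (use b' x \<kappa> in auto)
  have "K \<noteq> 0"
    using cube[OF y(1)] a[OF y(1)] a'_affine[OF y(1)] by auto
  then show False by (rule no_affine_cube_law[OF J _ cube])
qed

end

section \<open>Isometries between the metrics g[\<kappa>]\<close>

text \<open>g[\<kappa>] = \<kappa> \<cdot> gcoeff Y \<cdot> dx dy.\<close>

definition gcoeff :: "(real \<Rightarrow> real) \<Rightarrow> real \<times> real \<Rightarrow> real" where
  "gcoeff Y p = Y (snd p) + fst p"

locale local_isometry = rho_antiderivative +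
  fixes \<kappa> \<kappa>' :: real and W :: "(real \<times> real) set" and \<phi> :: "real \<times> real \<Rightarrow> real \<times> real"
  assumes kappa_nz: "\<kappa> \<noteq> 0" "\<kappa>' \<noteq> 0"
    and open_W: "open W" and W_sub: "W \<subseteq> UNIV \<times> I" and phi_into: "\<phi> ` W \<subseteq> UNIV \<times> I"
    and phi_deriv: "\<And>p. p \<in> W \<Longrightarrow> (\<phi> has_derivative frechet_derivative \<phi> (at p)) (at p)"
    and phi_C1: "\<And>v. continuous_on W (\<lambda>p. frechet_derivative \<phi> (at p) v)"
    and isometry: "\<And>p v w. p \<in> W \<Longrightarrow> pullback \<phi> (gmet Y \<kappa>') p v w = gmet Y \<kappa> p v w"
begin

definition Dx :: "real \<times> real \<Rightarrow> real \<times> real" where "Dx p = frechet_derivative \<phi> (at p) (1, 0)"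

definition Dy :: "real \<times> real \<Rightarrow> real \<times> real" where "Dy p = frechet_derivative \<phi> (at p) (0, 1)"

lemma isometry_relations:
  assumes "p \<in> W"
  shows "gcoeff Y (\<phi> p) * (fst (Dx p) * snd (Dx p)) = 0"
    and "gcoeff Y (\<phi> p) * (fst (Dy p) * snd (Dy p)) = 0"
    and "\<kappa>' * gcoeff Y (\<phi> p) * (fst (Dx p) * snd (Dy p) + snd (Dx p) * fst (Dy p)) = \<kappa> * gcoeff Y p"
proof -
  show "gcoeff Y (\<phi> p) * (fst (Dx p) * snd (Dx p)) = 0"
    using isometry[OF assms, of "(1, 0)" "(1, 0)"] kappa_nz
    by (simp add: pullback_def gmet_def gcoeff_def Dx_def)
  show "gcoeff Y (\<phi> p) * (fst (Dy p) * snd (Dy p)) = 0"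
    using isometry[OF assms, of "(0, 1)" "(0, 1)"] kappa_nz
    by (simp add: pullback_def gmet_def gcoeff_def Dy_def)
  show "\<kappa>' * gcoeff Y (\<phi> p) * (fst (Dx p) * snd (Dy p) + snd (Dx p) * fst (Dy p)) = \<kappa> * gcoeff Y p"
    using isometry[OF assms, of "(1, 0)" "(0, 1)"]
    by (simp add: pullback_def gmet_def gcoeff_def Dx_def Dy_def)
qed

lemma isometry_at_nondegenerate_point:
  assumes "p \<in> W" "gcoeff Y p \<noteq> 0"
  shows "fst (Dx p) * snd (Dx p) = 0" and "fst (Dy p) * snd (Dy p) = 0"
    and "fst (Dx p) * snd (Dy p) + snd (Dx p) * fst (Dy p) \<noteq> 0"
proof -
  have "\<kappa>' * gcoeff Y (\<phi> p) * (fst (Dx p) * snd (Dy p) + snd (Dx p) * fst (Dy p)) \<noteq> 0"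
    using isometry_relations(3)[OF assms(1)] assms(2) kappa_nz by simp
  then show "fst (Dx p) * snd (Dx p) = 0" "fst (Dy p) * snd (Dy p) = 0"
    "fst (Dx p) * snd (Dy p) + snd (Dx p) * fst (Dy p) \<noteq> 0"
    using isometry_relations(1,2)[OF assms(1)] by auto
qed

lemma phi_partials:
  assumes "(x, y) \<in> W"
  shows "((\<lambda>t. fst (\<phi> (t, y))) has_real_derivative fst (Dx (x, y))) (at x)"
    and "((\<lambda>t. snd (\<phi> (t, y))) has_real_derivative snd (Dx (x, y))) (at x)"
    and "((\<lambda>t. fst (\<phi> (x, t))) has_real_derivative fst (Dy (x, y))) (at y)"
    and "((\<lambda>t. snd (\<phi> (x, t))) has_real_derivative snd (Dy (x, y))) (at y)"
  using has_derivative_partials[OF has_derivative_fst[OF phi_deriv[OF assms]]]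
    has_derivative_partials[OF has_derivative_snd[OF phi_deriv[OF assms]]]
  by (simp_all add: Dx_def Dy_def)

lemma continuous_on_gcoeff: "continuous_on W (gcoeff Y)"
proof -
  have "continuous_on I Y"
    using Y_has_derivative by (blast intro: continuous_at_imp_continuous_on DERIV_isCont)
  then have "continuous_on W (\<lambda>p. Y (snd p))"
    by (rule continuous_on_compose2[OF _ continuous_on_snd[OF continuous_on_id]]) (use W_sub in auto)
  then show ?thesis unfolding gcoeff_def by (intro continuous_intros)
qed

lemma continuous_on_partials:
  "continuous_on W (\<lambda>p. fst (Dx p))" "continuous_on W (\<lambda>p. snd (Dx p))"
  "continuous_on W (\<lambda>p. fst (Dy p))" "continuous_on W (\<lambda>p. snd (Dy p))"
  unfolding Dx_def Dy_def by (intro continuous_intros phi_C1)+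

lemma nondegenerate_square:
  fixes h :: "real \<times> real \<Rightarrow> real"
  assumes "(x1, y1) \<in> W" "gcoeff Y (x1, y1) \<noteq> 0" "h (x1, y1) \<noteq> 0" "continuous_on W h"
  obtains \<delta> where "\<delta> > 0" "\<And>x y. x \<in> {x1 - \<delta><..<x1 + \<delta>} \<Longrightarrow> y \<in> {y1 - \<delta><..<y1 + \<delta>} \<Longrightarrow>
      (x, y) \<in> W \<and> gcoeff Y (x, y) \<noteq> 0 \<and> h (x, y) \<noteq> 0 \<and> y \<in> I \<and> snd (\<phi> (x, y)) \<in> I"
proof -
  have "continuous_on W (\<lambda>p. gcoeff Y p * h p)"
    using continuous_on_gcoeff assms(4) by (rule continuous_on_mult)
  moreover have "gcoeff Y (x1, y1) * h (x1, y1) \<noteq> 0" using assms(2,3) by simp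
  ultimately obtain \<delta> where "\<delta> > 0" and \<delta>: "\<And>x y. x \<in> {x1 - \<delta><..<x1 + \<delta>} \<Longrightarrow> y \<in> {y1 - \<delta><..<y1 + \<delta>} \<Longrightarrow>
      (x, y) \<in> W \<and> gcoeff Y (x, y) * h (x, y) \<noteq> 0"
    by (rule open_square_nonvanishing[where h = "\<lambda>p. gcoeff Y p * h p", OF open_W _ assms(1)]) blast
  show ?thesis
  proof (rule that[OF \<open>\<delta> > 0\<close>])
    fix x y assume "x \<in> {x1 - \<delta><..<x1 + \<delta>}" "y \<in> {y1 - \<delta><..<y1 + \<delta>}"
    with \<delta> have "(x, y) \<in> W" "gcoeff Y (x, y) * h (x, y) \<noteq> 0" by blast+
    then show "(x, y) \<in> W \<and> gcoeff Y (x, y) \<noteq> 0 \<and> h (x, y) \<noteq> 0 \<and> y \<in> I \<and> snd (\<phi> (x, y)) \<in> I"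
      using W_sub phi_into by (auto simp: mem_Times_iff)
  qed
qed

lemma kappa_eq_near_product_point:
  assumes p1: "(x1, y1) \<in> W" "gcoeff Y (x1, y1) \<noteq> 0" "fst (Dx (x1, y1)) * snd (Dy (x1, y1)) \<noteq> 0"
  shows "\<kappa> = \<kappa>'"
proof -
  have "continuous_on W (\<lambda>p. fst (Dx p) * snd (Dy p))"
    by (intro continuous_intros continuous_on_partials)
  then obtain \<delta> where "\<delta> > 0" and sq: "\<And>x y. x \<in> {x1 - \<delta><..<x1 + \<delta>} \<Longrightarrow> y \<in> {y1 - \<delta><..<y1 + \<delta>} \<Longrightarrow>
      (x, y) \<in> W \<and> gcoeff Y (x, y) \<noteq> 0 \<and> fst (Dx (x, y)) * snd (Dy (x, y)) \<noteq> 0 \<and> y \<in> I \<and> snd (\<phi> (x, y)) \<in> I"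
    using nondegenerate_square[where h = "\<lambda>p. fst (Dx p) * snd (Dy p)", OF p1] by blast
  let ?L = "{x1 - \<delta><..<x1 + \<delta>}" and ?J = "{y1 - \<delta><..<y1 + \<delta>}"
  have on_sq: "(x, y) \<in> W" "fst (Dx (x, y)) \<noteq> 0" "snd (Dy (x, y)) \<noteq> 0"
      "snd (Dx (x, y)) = 0" "fst (Dy (x, y)) = 0" if "x \<in> ?L" "y \<in> ?J" for x y
    using sq[OF that] isometry_at_nondegenerate_point(1,2)[of "(x, y)"] by auto
  have partials:
      "((\<lambda>t. fst (\<phi> (t, y))) has_real_derivative fst (Dx (x, y))) (at x) \<and>
       ((\<lambda>t. fst (\<phi> (x, t))) has_real_derivative 0) (at y)"
      "((\<lambda>t. snd (\<phi> (t, y))) has_real_derivative 0) (at x) \<and>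
       ((\<lambda>t. snd (\<phi> (x, t))) has_real_derivative snd (Dy (x, y))) (at y)"
    if "x \<in> ?L" "y \<in> ?J" for x y
    using phi_partials[OF on_sq(1)[OF that]] on_sq(4,5)[OF that] by simp_all
  have sep: "fst (\<phi> (x, y)) = fst (\<phi> (x, y1)) \<and> snd (\<phi> (x, y)) = snd (\<phi> (x1, y)) \<and>
      fst (Dx (x, y)) = fst (Dx (x, y1)) \<and> snd (Dy (x, y)) = snd (Dy (x1, y))"
    if "x \<in> ?L" "y \<in> ?J" for x y
    by (rule separated_variables[where u = "\<lambda>p. fst (\<phi> p)" and v = "\<lambda>p. snd (\<phi> p)"
          and ux = "\<lambda>p. fst (Dx p)" and vy = "\<lambda>p. snd (Dy p)" and L = ?L and J = ?J])
      (use that \<open>\<delta> > 0\<close> partials in auto)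
  show ?thesis
  proof (rule product_solution_kappa_eq[where a = "\<lambda>x. fst (\<phi> (x, y1))" and a' = "\<lambda>x. fst (Dx (x, y1))"
        and b = "\<lambda>y. snd (\<phi> (x1, y))" and b' = "\<lambda>y. snd (Dy (x1, y))"])
    show "x1 - \<delta> < x1 + \<delta>" "y1 - \<delta> < y1 + \<delta>" using \<open>\<delta> > 0\<close> by auto
    show "?J \<subseteq> I" using sq[of x1] \<open>\<delta> > 0\<close> by auto
    show "((\<lambda>x. fst (\<phi> (x, y1))) has_real_derivative fst (Dx (x, y1))) (at x) \<and> fst (Dx (x, y1)) \<noteq> 0"
      if "x \<in> ?L" for x
      using phi_partials(1) on_sq(1,2)[OF that] \<open>\<delta> > 0\<close> by auto
    show "snd (\<phi> (x1, y)) \<in> I \<and> ((\<lambda>y. snd (\<phi> (x1, y))) has_real_derivative snd (Dy (x1, y))) (at y)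
        \<and> snd (Dy (x1, y)) \<noteq> 0" if "y \<in> ?J" for y
      using sq[OF _ that, of x1] phi_partials(4) on_sq(1,3)[OF _ that, of x1] \<open>\<delta> > 0\<close> by auto
    show "\<kappa>' * (Y (snd (\<phi> (x1, y))) + fst (\<phi> (x, y1))) * (fst (Dx (x, y1)) * snd (Dy (x1, y))) = \<kappa> * (Y y + x)"
      if "x \<in> ?L" "y \<in> ?J" for x y
      using isometry_relations(3)[OF on_sq(1)[OF that]] on_sq(4,5)[OF that] sep[OF that]
      by (simp add: gcoeff_def)
  qed (use kappa_nz in auto)
qed

lemma no_swapped_point:
  assumes p1: "(x1, y1) \<in> W" "gcoeff Y (x1, y1) \<noteq> 0" "snd (Dx (x1, y1)) * fst (Dy (x1, y1)) \<noteq> 0"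
  shows False
proof -
  have "continuous_on W (\<lambda>p. snd (Dx p) * fst (Dy p))"
    by (intro continuous_intros continuous_on_partials)
  then obtain \<delta> where "\<delta> > 0" and sq: "\<And>x y. x \<in> {x1 - \<delta><..<x1 + \<delta>} \<Longrightarrow> y \<in> {y1 - \<delta><..<y1 + \<delta>} \<Longrightarrow>
      (x, y) \<in> W \<and> gcoeff Y (x, y) \<noteq> 0 \<and> snd (Dx (x, y)) * fst (Dy (x, y)) \<noteq> 0 \<and> y \<in> I \<and> snd (\<phi> (x, y)) \<in> I"
    using nondegenerate_square[where h = "\<lambda>p. snd (Dx p) * fst (Dy p)", OF p1] by blast
  let ?L = "{x1 - \<delta><..<x1 + \<delta>}" and ?J = "{y1 - \<delta><..<y1 + \<delta>}"
  have on_sq: "(x, y) \<in> W" "snd (Dx (x, y)) \<noteq> 0" "fst (Dy (x, y)) \<noteq> 0"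
      "fst (Dx (x, y)) = 0" "snd (Dy (x, y)) = 0" if "x \<in> ?L" "y \<in> ?J" for x y
    using sq[OF that] isometry_at_nondegenerate_point(1,2)[of "(x, y)"] by auto
  have partials:
      "((\<lambda>t. snd (\<phi> (t, y))) has_real_derivative snd (Dx (x, y))) (at x) \<and>
       ((\<lambda>t. snd (\<phi> (x, t))) has_real_derivative 0) (at y)"
      "((\<lambda>t. fst (\<phi> (t, y))) has_real_derivative 0) (at x) \<and>
       ((\<lambda>t. fst (\<phi> (x, t))) has_real_derivative fst (Dy (x, y))) (at y)"
    if "x \<in> ?L" "y \<in> ?J" for x y
    using phi_partials[OF on_sq(1)[OF that]] on_sq(4,5)[OF that] by simp_all
  have sep: "snd (\<phi> (x, y)) = snd (\<phi> (x, y1)) \<and> fst (\<phi> (x, y)) = fst (\<phi> (x1, y)) \<and>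
      snd (Dx (x, y)) = snd (Dx (x, y1)) \<and> fst (Dy (x, y)) = fst (Dy (x1, y))"
    if "x \<in> ?L" "y \<in> ?J" for x y
    by (rule separated_variables[where u = "\<lambda>p. snd (\<phi> p)" and v = "\<lambda>p. fst (\<phi> p)"
          and ux = "\<lambda>p. snd (Dx p)" and vy = "\<lambda>p. fst (Dy p)" and L = ?L and J = ?J])
      (use that \<open>\<delta> > 0\<close> partials in auto)
  show False
  proof (rule swapped_solution_impossible[where a = "\<lambda>y. fst (\<phi> (x1, y))" and a' = "\<lambda>y. fst (Dy (x1, y))"
        and b = "\<lambda>x. snd (\<phi> (x, y1))" and b' = "\<lambda>x. snd (Dx (x, y1))"])
    show "x1 - \<delta> < x1 + \<delta>" "y1 - \<delta> < y1 + \<delta>" using \<open>\<delta> > 0\<close> by auto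
    show "?J \<subseteq> I" using sq[of x1] \<open>\<delta> > 0\<close> by auto
    show "((\<lambda>y. fst (\<phi> (x1, y))) has_real_derivative fst (Dy (x1, y))) (at y) \<and> fst (Dy (x1, y)) \<noteq> 0"
      if "y \<in> ?J" for y
      using phi_partials(3) on_sq(1,3)[OF _ that, of x1] \<open>\<delta> > 0\<close> by auto
    show "snd (Dx (x, y1)) \<noteq> 0" if "x \<in> ?L" for x
      using on_sq(2)[OF that, of y1] \<open>\<delta> > 0\<close> by auto
    show "\<kappa>' * (Y (snd (\<phi> (x, y1))) + fst (\<phi> (x1, y))) * (fst (Dy (x1, y)) * snd (Dx (x, y1))) = \<kappa> * (Y y + x)"
      if "x \<in> ?L" "y \<in> ?J" for x y
      using isometry_relations(3)[OF on_sq(1)[OF that]] on_sq(4,5)[OF that] sep[OF that]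
      by (simp add: gcoeff_def mult.commute)
  qed (use kappa_nz in auto)
qed

lemma nondegenerate_point_exists:
  assumes "W \<noteq> {}" obtains p where "p \<in> W" "gcoeff Y p \<noteq> 0"
proof -
  obtain x y where p: "(x, y) \<in> W" using assms by auto
  obtain e where "e > 0" "ball (x, y) e \<subseteq> W" using open_contains_ball open_W p by blast
  then have "(x + e / 2, y) \<in> W" by (auto simp: dist_Pair_Pair dist_real_def)
  moreover have "gcoeff Y (x, y) \<noteq> 0 \<or> gcoeff Y (x + e / 2, y) \<noteq> 0"
    using \<open>e > 0\<close> by (auto simp: gcoeff_def)
  ultimately show ?thesis using that p by blast
qed

theorem kappa_eq:
  assumes "W \<noteq> {}" shows "\<kappa> = \<kappa>'"
proof -
  obtain x y where p: "(x, y) \<in> W" "gcoeff Y (x, y) \<noteq> 0"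
    by (metis assms nondegenerate_point_exists surj_pair)
  then have "fst (Dx (x, y)) * snd (Dy (x, y)) \<noteq> 0 \<or> snd (Dx (x, y)) * fst (Dy (x, y)) \<noteq> 0"
    using isometry_at_nondegenerate_point(3) by force
  then show ?thesis
    using kappa_eq_near_product_point[OF p] no_swapped_point[OF p] by blast
qed

end

theorem lemma7p1:
  fixes I :: "real set" and Y :: "real \<Rightarrow> real" and \<kappa> \<kappa>' :: real
    and U V :: "(real \<times> real) set" and \<phi> :: "real \<times> real \<Rightarrow> real \<times> real"
  assumes I: "open I" "is_interval I" "I \<noteq> {}" "0 \<notin> I"
    and Y: "\<And>s. s \<in> I \<Longrightarrow> (Y has_real_derivative exp (3 / (2 * s)) / \<bar>s\<bar> powr (3/2)) (at s)"
    and kappa: "\<kappa> \<noteq> 0" "\<kappa>' \<noteq> 0"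
    and UV: "open U" "open V" "U \<noteq> {}" "U \<subseteq> UNIV \<times> I" "V \<subseteq> UNIV \<times> I"
    and phi: "local_diffeo_on U \<phi>" "\<phi> ` U \<subseteq> V"
    and pull: "\<And>p v w. p \<in> U \<Longrightarrow> pullback \<phi> (gmet Y \<kappa>') p v w = gmet Y \<kappa> p v w"
  shows "\<kappa> = \<kappa>'"
proof -
  obtain p0 where "p0 \<in> U" using UV(3) by blast
  then obtain W where W: "open W" "p0 \<in> W" "W \<subseteq> U" "smooth_on W \<phi>"
    using phi(1) unfolding local_diffeo_on_def by blast
  then have "Ck_on (Suc 0) W \<phi>" unfolding smooth_on_def by blast
  then have C1: "\<phi> differentiable_on W" "\<And>v. continuous_on W (\<lambda>p. frechet_derivative \<phi> (at p) v)"
    unfolding Ck_on.simps by blast+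
  interpret local_isometry I Y \<kappa> \<kappa>' W \<phi>
  proof
    show "(Y has_real_derivative rho s) (at s)" if "s \<in> I" for s
      using Y[OF that] by (simp add: rho_def)
    show "(\<phi> has_derivative frechet_derivative \<phi> (at p)) (at p)" if "p \<in> W" for p
      using C1(1) W(1) that
      by (simp add: differentiable_on_eq_differentiable_at frechet_derivative_works[symmetric])
    show "\<phi> ` W \<subseteq> UNIV \<times> I" using W(3) phi(2) UV(5) by blast
  qed (use I(4) kappa W UV C1(2) pull in auto)
  show ?thesis using kappa_eq W(2) by blast
qed

end
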